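(* Let $x_1,\dots,x_n$ be fixed data points and let $s$ be a real-valued function of $n$ arguments that is symmetric under permutations of its arguments. Let $I_1,\dots,I_n$ be i.i.d. uniform on $\{1,\dots,n\}$ (a bootstrap resample), set $X_i^*=x_{I_i}$, $s^*=s(X_1^*,\dots,X_n^* )$ and $w_j^*=\#\{i: I_i=j\}$ for $j=1,\dots,n$. Write $\mathbb{E}_*,\mathrm{Var}_*,\mathrm{Cov}_*$ for expectation, variance and covariance with respect to this resampling distribution, and let $e_j=\mathbb{E}_*[s^*\mid I_1=j]$ and $s_0=\mathbb{E}_*[s^*]$. Let $l^*$ be the orthogonal projection (in $L^2$ of the resampling distribution) of $s^*-s_0$ onto the linear span of $w_1^*,\dots,w_n^*$. Then: (1) $\mathbb{E}_*[s^*w_j^*]=e_j$ for every $j$; (2) $l^*=\sum_{j=1}^n w_j^*\beta_j$ with $\beta_j=e_j-s_0$; (3) $\mathrm{Var}_*(l^* )=\mathrm{JK}_\mathrm{B}=\mathrm{IJ}_\mathrm{B}$, where $\mathrm{JK}_\mathrm{B}=\sum_{j=1}^n(e_j-s_0)^2$ and $\mathrm{IJ}_\mathrm{B}=\sum_{j=1}^n\mathrm{Cov}_*^2(s^*,w_j^* )$.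
   Context: The bootstrap resample is drawn conditionally on the data, so all starred quantities are computed with $x_1,\dots,x_n$ held fixed; $w^*=(w_1^*,\dots,w_n^* )$ is Multinomial$(n;1/n,\dots,1/n)$. *)

theory Defs
  imports "HOL-Probability.Probability" "HOL-Combinatorics.Permutations"
begin

text \<open>Bootstrap resampling, 0-based indices: data points x 0, ..., x (n-1);
  a resample is I : {..<n} -> {..<n} (extensional), drawn uniformly, i.e.
  I 0, ..., I (n-1) i.i.d. uniform on {..<n}.\<close>

definition boot_space :: "nat \<Rightarrow> (nat \<Rightarrow> nat) set" where
  "boot_space n = PiE {..<n} (\<lambda>_. {..<n})"

definition boot_pmf :: "nat \<Rightarrow> (nat \<Rightarrow> nat) pmf" where
  "boot_pmf n = pmf_of_set (boot_space n)"

definition bootE :: "nat \<Rightarrow> ((nat \<Rightarrow> nat) \<Rightarrow> real) \<Rightarrow> real" where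
  "bootE n f = measure_pmf.expectation (boot_pmf n) f"

definition bootVar :: "nat \<Rightarrow> ((nat \<Rightarrow> nat) \<Rightarrow> real) \<Rightarrow> real" where
  "bootVar n f = measure_pmf.variance (boot_pmf n) f"

definition bootCov :: "nat \<Rightarrow> ((nat \<Rightarrow> nat) \<Rightarrow> real) \<Rightarrow> ((nat \<Rightarrow> nat) \<Rightarrow> real) \<Rightarrow> real" where
  "bootCov n f g = bootE n (\<lambda>I. (f I - bootE n f) * (g I - bootE n g))"

text \<open>Elementary conditional expectation E_*[f | I_1 = j] (I_1 is index 0 here)\<close>
definition bootE_first :: "nat \<Rightarrow> ((nat \<Rightarrow> nat) \<Rightarrow> real) \<Rightarrow> nat \<Rightarrow> real" where
  "bootE_first n f j =
     measure_pmf.expectation (pmf_of_set {I \<in> boot_space n. I 0 = j}) f"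

definition wcount :: "nat \<Rightarrow> nat \<Rightarrow> (nat \<Rightarrow> nat) \<Rightarrow> real" where
  "wcount n j I = real (card {i \<in> {..<n}. I i = j})"

definition sstar :: "nat \<Rightarrow> ('a list \<Rightarrow> real) \<Rightarrow> (nat \<Rightarrow> 'a) \<Rightarrow> (nat \<Rightarrow> nat) \<Rightarrow> real" where
  "sstar n s x I = s (map (\<lambda>i. x (I i)) [0..<n])"

definition symmetric_stat :: "nat \<Rightarrow> ('a list \<Rightarrow> real) \<Rightarrow> bool" where
  "symmetric_stat n s \<longleftrightarrow>
     (\<forall>p ys. p permutes {..<n} \<longrightarrow> length ys = n \<longrightarrow> s (permute_list p ys) = s ys)"

definition is_boot_proj :: "nat \<Rightarrow> ((nat \<Rightarrow> nat) \<Rightarrow> real) \<Rightarrow> ((nat \<Rightarrow> nat) \<Rightarrow> real) \<Rightarrow> bool" where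
  "is_boot_proj n f l \<longleftrightarrow>
     (\<exists>c. \<forall>I \<in> boot_space n. l I = (\<Sum>j<n. c j * wcount n j I)) \<and>
     (\<forall>j<n. bootE n (\<lambda>I. (f I - l I) * wcount n j I) = 0)"

end

theory Submission
  imports Defs
begin

text \<open>Under the uniform resampling distribution the counts satisfy \<open>E w\<^sub>j = 1\<close> and
  \<open>E (w\<^sub>j w\<^sub>k) = \<delta>\<^sub>j\<^sub>k + (n - 1)/n\<close>, since distinct draws are independent. Hence the
  normal equations for projecting a centred \<open>f\<close> onto the span of the counts are solved by
  \<open>c\<^sub>j = E (f w\<^sub>j)\<close>, whose sum is \<open>n E f = 0\<close>, and
  \<open>Var (\<Sum>\<^sub>j c\<^sub>j w\<^sub>j) = \<Sum>\<^sub>j c\<^sub>j\<^sup>2 - (\<Sum>\<^sub>j c\<^sub>j)\<^sup>2/n\<close>.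
  Symmetry of \<open>s\<close> makes \<open>E (s\<^sup>* [I\<^sub>i = j])\<close> independent of the position \<open>i\<close> (transpose
  positions \<open>0\<close> and \<open>i\<close>), so \<open>E (s\<^sup>* w\<^sub>j) = n E (s\<^sup>* [I\<^sub>0 = j]) = e\<^sub>j\<close>; with \<open>E w\<^sub>j = 1\<close> this
  identifies the projection coefficients and the covariances with \<open>e\<^sub>j - s\<^sub>0\<close>.\<close>

lemma finite_boot_space: "finite (boot_space n)"
  unfolding boot_space_def by (simp add: finite_PiE)

lemma boot_space_nonempty: "boot_space n \<noteq> {}"
  unfolding boot_space_def by (auto simp: PiE_eq_empty_iff)

lemma card_boot_space: "card (boot_space n) = n ^ n"
  unfolding boot_space_def by (simp add: card_PiE)

lemma bootE_eq_sum: "bootE n f = (\<Sum>I\<in>boot_space n. f I) / real n ^ n"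
  unfolding bootE_def boot_pmf_def
  by (simp add: integral_pmf_of_set[OF boot_space_nonempty finite_boot_space] card_boot_space)

lemma bootE_cong: "(\<And>I. I \<in> boot_space n \<Longrightarrow> f I = g I) \<Longrightarrow> bootE n f = bootE n g"
  unfolding bootE_eq_sum by (simp cong: sum.cong)

lemma bootE_const [simp]: "bootE n (\<lambda>_. c) = c"
  unfolding bootE_eq_sum by (simp add: card_boot_space)

lemma bootE_add: "bootE n (\<lambda>I. f I + g I) = bootE n f + bootE n g"
  unfolding bootE_eq_sum by (simp add: sum.distrib add_divide_distrib)

lemma bootE_diff: "bootE n (\<lambda>I. f I - g I) = bootE n f - bootE n g"
  unfolding bootE_eq_sum by (simp add: sum_subtractf diff_divide_distrib)

lemma bootE_cmult: "bootE n (\<lambda>I. c * f I) = c * bootE n f"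
  unfolding bootE_eq_sum by (simp add: sum_distrib_left)

lemma bootE_sum: "bootE n (\<lambda>I. \<Sum>j\<in>J. f j I) = (\<Sum>j\<in>J. bootE n (f j))"
  unfolding bootE_eq_sum by (simp add: sum.swap[of _ "boot_space n"] sum_divide_distrib)

lemma bootVar_eq: "bootVar n f = bootE n (\<lambda>I. (f I)\<^sup>2) - (bootE n f)\<^sup>2"
proof -
  have "bootVar n f = bootE n (\<lambda>I. (f I)\<^sup>2 - 2 * bootE n f * f I + (bootE n f)\<^sup>2)"
    unfolding bootVar_def bootE_def
    by (intro arg_cong[of _ _ "measure_pmf.expectation (boot_pmf n)"] ext) (simp add: power2_diff algebra_simps)
  then show ?thesis
    by (simp add: bootE_add bootE_diff bootE_cmult power2_eq_square)
qed

lemma bootVar_cong: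
  assumes "\<And>I. I \<in> boot_space n \<Longrightarrow> f I = g I"
  shows "bootVar n f = bootVar n g"
proof -
  have "bootE n f = bootE n g" "bootE n (\<lambda>I. (f I)\<^sup>2) = bootE n (\<lambda>I. (g I)\<^sup>2)"
    using assms by (auto intro: bootE_cong)
  then show ?thesis
    by (simp add: bootVar_eq)
qed

lemma card_boot_space_cylinder:
  assumes "K \<subseteq> {..<n}" "\<And>k. k \<in> K \<Longrightarrow> v k < n"
  shows "card {I \<in> boot_space n. \<forall>k\<in>K. I k = v k} = n ^ (n - card K)"
proof -
  have "{I \<in> boot_space n. \<forall>k\<in>K. I k = v k} = PiE {..<n} (\<lambda>k. if k \<in> K then {v k} else {..<n})"
    using assms unfolding boot_space_def by (auto simp: PiE_iff extensional_def split: if_splits; force)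
  also have "card \<dots> = (\<Prod>k<n. if k \<in> K then 1 else n)"
    by (simp add: card_PiE if_distrib cong: if_cong)
  also have "\<dots> = n ^ card ({..<n} - K)"
    by (simp add: prod.If_cases Diff_eq)
  also have "card ({..<n} - K) = n - card K"
    using assms(1) by (simp add: card_Diff_subset finite_subset)
  finally show ?thesis .
qed

lemma bootE_cylinder:
  assumes "K \<subseteq> {..<n}" "\<And>k. k \<in> K \<Longrightarrow> v k < n"
  shows "bootE n (\<lambda>I. of_bool (\<forall>k\<in>K. I k = v k)) = 1 / real n ^ card K"
proof -
  have K: "card K \<le> n"
    using assms(1) by (metis card_lessThan card_mono finite_lessThan)
  then have "real n ^ (n - card K) / real n ^ n = 1 / real n ^ card K"
    using K by (cases "n = 0") (simp_all add: power_diff)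
  then show ?thesis
    using card_boot_space_cylinder[OF assms]
    by (simp add: bootE_eq_sum of_bool_def sum.If_cases[OF finite_boot_space] Int_def)
qed

lemma bootE_first_eq:
  assumes "j < n"
  shows "bootE_first n f j = real n * bootE n (\<lambda>I. f I * of_bool (I 0 = j))"
proof -
  let ?A = "{I \<in> boot_space n. I 0 = j}"
  have card_A: "card ?A = n ^ (n - 1)"
    using card_boot_space_cylinder[of "{0}" n "\<lambda>_. j"] assms by simp
  then have "?A \<noteq> {}"
    using assms by (metis card.empty power_eq_0_iff less_nat_zero_code)
  then have "bootE_first n f j = (\<Sum>I\<in>?A. f I) / real n ^ (n - 1)"
    unfolding bootE_first_def using finite_boot_space card_A by (simp add: integral_pmf_of_set)
  also have "\<dots> = real n * ((\<Sum>I\<in>?A. f I) / real n ^ n)"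
    using assms by (cases n) simp_all
  also have "(\<Sum>I\<in>?A. f I) = (\<Sum>I\<in>boot_space n. f I * of_bool (I 0 = j))"
    by (auto simp: sum.inter_filter[OF finite_boot_space] intro!: sum.cong)
  finally show ?thesis
    by (simp add: bootE_eq_sum)
qed

lemma wcount_eq_sum: "wcount n j = (\<lambda>I. \<Sum>i<n. of_bool (I i = j))"
  unfolding wcount_def by (simp add: fun_eq_iff of_bool_def sum.If_cases Int_def lessThan_def)

lemma sum_wcount:
  assumes "I \<in> boot_space n"
  shows "(\<Sum>j<n. wcount n j I) = real n"
proof -
  have "I i < n" if "i < n" for i
    using assms that unfolding boot_space_def by auto
  then show ?thesis
    unfolding wcount_eq_sum by (simp add: sum.swap[of _ "{..<n}"] of_bool_def)
qed

lemma bootE_indicator: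
  assumes "i < n" "j < n"
  shows "bootE n (\<lambda>I. of_bool (I i = j)) = 1 / real n"
  using bootE_cylinder[of "{i}" n "\<lambda>_. j"] assms by simp

lemma bootE_indicator_pair:
  assumes "i < n" "i' < n" "j < n" "k < n"
  shows "bootE n (\<lambda>I. of_bool (I i = j) * of_bool (I i' = k))
    = (if i = i' then of_bool (j = k) / real n else 1 / (real n)\<^sup>2)"
proof (cases "i = i'")
  case True
  then have "bootE n (\<lambda>I. of_bool (I i = j) * of_bool (I i' = k))
      = bootE n (\<lambda>I. of_bool (j = k) * of_bool (I i = j))"
    by (intro bootE_cong) auto
  then show ?thesis
    using True assms by (simp add: bootE_cmult bootE_indicator)
next
  case False
  let ?v = "\<lambda>m. if m = i then j else k"
  have "bootE n (\<lambda>I. of_bool (I i = j) * of_bool (I i' = k))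
      = bootE n (\<lambda>I. of_bool (\<forall>m\<in>{i, i'}. I m = ?v m))"
    using False by (intro bootE_cong) auto
  also have "\<dots> = 1 / (real n)\<^sup>2"
    using bootE_cylinder[of "{i, i'}" n ?v] False assms by (simp add: power2_eq_square)
  finally show ?thesis
    using False by simp
qed

lemma bootE_wcount:
  assumes "j < n"
  shows "bootE n (wcount n j) = 1"
  unfolding wcount_eq_sum bootE_sum using assms by (simp add: bootE_indicator)

lemma sum_if_eq_const:
  assumes "finite A" "a \<in> A"
  shows "(\<Sum>x\<in>A. if x = a then u else v) = u + of_nat (card A - 1) * v"
  using assms by (simp add: sum.delta_remove)

lemma bootE_wcount_mult:
  assumes "j < n" "k < n"
  shows "bootE n (\<lambda>I. wcount n j I * wcount n k I) = of_bool (j = k) + (real n - 1) / real n"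
proof -
  have "bootE n (\<lambda>I. wcount n j I * wcount n k I)
      = (\<Sum>i<n. \<Sum>i'<n. bootE n (\<lambda>I. of_bool (I i = j) * of_bool (I i' = k)))"
    unfolding wcount_eq_sum sum_product by (simp only: bootE_sum)
  also have "\<dots> = (\<Sum>i<n. \<Sum>i'<n. if i' = i then of_bool (j = k) / real n else 1 / (real n)\<^sup>2)"
    using assms by (intro sum.cong refl) (auto simp: bootE_indicator_pair)
  also have "\<dots> = real n * (of_bool (j = k) / real n + (real n - 1) / (real n)\<^sup>2)"
    using assms by (simp add: sum_if_eq_const)
  also have "\<dots> = of_bool (j = k) + (real n - 1) / real n"
    using assms by (simp add: field_simps power2_eq_square)
  finally show ?thesis .
qed

lemma bootE_lincomb_wcount:
  "bootE n (\<lambda>I. \<Sum>j<n. c j * wcount n j I) = (\<Sum>j<n. c j)"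
  by (simp add: bootE_sum bootE_cmult bootE_wcount)

lemma bootE_lincomb_wcount_mult:
  assumes "k < n"
  shows "bootE n (\<lambda>I. (\<Sum>j<n. c j * wcount n j I) * wcount n k I)
    = c k + (real n - 1) / real n * (\<Sum>j<n. c j)"
proof -
  define a where "a = (real n - 1) / real n"
  have "bootE n (\<lambda>I. (\<Sum>j<n. c j * wcount n j I) * wcount n k I)
      = (\<Sum>j<n. c j * (of_bool (j = k) + a))"
    using assms by (simp add: sum_distrib_right bootE_sum mult.assoc bootE_cmult bootE_wcount_mult a_def)
  also have "\<dots> = (\<Sum>j<n. c j * of_bool (j = k)) + (\<Sum>j<n. c j) * a"
    by (simp add: distrib_left sum.distrib sum_distrib_right)
  also have "\<dots> = c k + a * (\<Sum>j<n. c j)"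
  proof -
    have "(\<Sum>j<n. c j * of_bool (j = k)) = (\<Sum>j<n. if j = k then c j else 0)"
      by (intro sum.cong) auto
    then show ?thesis
      using assms by simp
  qed
  finally show ?thesis
    unfolding a_def .
qed

lemma bootVar_lincomb_wcount:
  "bootVar n (\<lambda>I. \<Sum>j<n. c j * wcount n j I) = (\<Sum>j<n. (c j)\<^sup>2) - (\<Sum>j<n. c j)\<^sup>2 / real n"
proof (cases "n = 0")
  case False
  define l where "l I = (\<Sum>j<n. c j * wcount n j I)" for I
  define C where "C = (\<Sum>j<n. c j)"
  define a where "a = (real n - 1) / real n"
  have "(l I)\<^sup>2 = (\<Sum>k<n. c k * (l I * wcount n k I))" for I
    unfolding power2_eq_square by (subst (2) l_def) (simp add: sum_distrib_left mult_ac)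
  then have "bootE n (\<lambda>I. (l I)\<^sup>2) = (\<Sum>k<n. c k * bootE n (\<lambda>I. l I * wcount n k I))"
    by (simp add: bootE_sum bootE_cmult)
  also have "\<dots> = (\<Sum>k<n. c k * (c k + a * C))"
    by (simp add: l_def bootE_lincomb_wcount_mult a_def C_def)
  also have "\<dots> = (\<Sum>k<n. (c k)\<^sup>2) + (\<Sum>k<n. c k) * (a * C)"
    by (simp add: distrib_left sum.distrib power2_eq_square sum_distrib_right)
  also have "\<dots> = (\<Sum>k<n. (c k)\<^sup>2) + a * C\<^sup>2"
    by (simp add: C_def[symmetric] power2_eq_square)
  finally show ?thesis
    using False unfolding l_def[abs_def]
    by (simp add: bootVar_eq bootE_lincomb_wcount a_def C_def field_simps)
qed (simp add: bootVar_eq)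

lemma sum_bootE_mult_wcount:
  "(\<Sum>j<n. bootE n (\<lambda>I. f I * wcount n j I)) = real n * bootE n f"
proof -
  have "(\<Sum>j<n. bootE n (\<lambda>I. f I * wcount n j I)) = bootE n (\<lambda>I. f I * (\<Sum>j<n. wcount n j I))"
    by (simp add: bootE_sum sum_distrib_left)
  also have "\<dots> = bootE n (\<lambda>I. real n * f I)"
    by (intro bootE_cong) (simp add: sum_wcount)
  finally show ?thesis
    by (simp add: bootE_cmult)
qed

lemma bootCov_wcount:
  assumes "j < n"
  shows "bootCov n f (wcount n j) = bootE n (\<lambda>I. (f I - bootE n f) * wcount n j I)"
proof -
  have "bootCov n f (wcount n j)
      = bootE n (\<lambda>I. (f I - bootE n f) * wcount n j I - (f I - bootE n f))"
    unfolding bootCov_def bootE_wcount[OF assms] by (simp add: algebra_simps)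
  then show ?thesis
    by (simp add: bootE_diff)
qed

lemma boot_space_permute:
  assumes "p permutes {..<n}" "I \<in> boot_space n"
  shows "restrict (I \<circ> p) {..<n} \<in> boot_space n"
proof -
  have "p k < n \<longleftrightarrow> k < n" for k
    using permutes_in_image[OF assms(1)] by simp
  then show ?thesis
    using assms(2) unfolding boot_space_def by (auto simp: PiE_iff)
qed

lemma restrict_permute_cancel:
  assumes "I \<in> boot_space n" "\<And>k. k < n \<Longrightarrow> q k < n" "\<And>k. k < n \<Longrightarrow> p (q k) = k"
  shows "restrict (restrict (I \<circ> p) {..<n} \<circ> q) {..<n} = I"
  using assms unfolding boot_space_def by (auto simp: PiE_iff extensional_def fun_eq_iff)

lemma bootE_permute:
  assumes p: "p permutes {..<n}"
  shows "bootE n (\<lambda>I. f (restrict (I \<circ> p) {..<n})) = bootE n f"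
proof -
  have q: "inv p permutes {..<n}"
    using p by (rule permutes_inv)
  have in_range: "p k < n \<longleftrightarrow> k < n" "inv p k < n \<longleftrightarrow> k < n" for k
    using permutes_in_image[OF p] permutes_in_image[OF q] by simp_all
  have "(\<Sum>I\<in>boot_space n. f (restrict (I \<circ> p) {..<n})) = (\<Sum>I\<in>boot_space n. f I)"
    by (rule sum.reindex_bij_witness[where i = "\<lambda>I. restrict (I \<circ> inv p) {..<n}"
          and j = "\<lambda>I. restrict (I \<circ> p) {..<n}"])
      (auto intro!: boot_space_permute[OF p] boot_space_permute[OF q] restrict_permute_cancel
        simp: in_range permutes_inverses[OF p])
  then show ?thesis
    by (simp add: bootE_eq_sum)
qed

lemma sstar_permute:
  assumes "symmetric_stat n s" "p permutes {..<n}"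
  shows "sstar n s x (restrict (I \<circ> p) {..<n}) = sstar n s x I"
proof -
  let ?ys = "map (\<lambda>i. x (I i)) [0..<n]"
  have "map (\<lambda>i. x (restrict (I \<circ> p) {..<n} i)) [0..<n] = permute_list p ?ys"
    using permutes_in_image[OF assms(2)] by (auto simp: permute_list_def)
  then show ?thesis
    using assms unfolding sstar_def symmetric_stat_def by simp
qed

lemma bootE_sstar_mult_indicator:
  assumes "symmetric_stat n s" "i < n"
  shows "bootE n (\<lambda>I. sstar n s x I * of_bool (I i = j))
    = bootE n (\<lambda>I. sstar n s x I * of_bool (I 0 = j))"
proof -
  let ?p = "Transposition.transpose 0 i"
  have p: "?p permutes {..<n}"
    using assms by (intro permutes_swap_id) auto
  have "bootE n (\<lambda>I. sstar n s x I * of_bool (I 0 = j))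
      = bootE n (\<lambda>I. sstar n s x (restrict (I \<circ> ?p) {..<n}) * of_bool (restrict (I \<circ> ?p) {..<n} 0 = j))"
    by (rule bootE_permute[OF p, symmetric])
  also have "\<dots> = bootE n (\<lambda>I. sstar n s x I * of_bool (I i = j))"
    using assms by (simp add: sstar_permute[OF assms(1) p])
  finally show ?thesis ..
qed

lemma bootE_sstar_mult_wcount:
  assumes "symmetric_stat n s" "j < n"
  shows "bootE n (\<lambda>I. sstar n s x I * wcount n j I) = bootE_first n (sstar n s x) j"
proof -
  have "bootE n (\<lambda>I. sstar n s x I * wcount n j I)
      = (\<Sum>i<n. bootE n (\<lambda>I. sstar n s x I * of_bool (I i = j)))"
    unfolding wcount_eq_sum sum_distrib_left by (simp only: bootE_sum)
  also have "\<dots> = (\<Sum>i<n. bootE n (\<lambda>I. sstar n s x I * of_bool (I 0 = j)))"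
    using assms by (intro sum.cong refl bootE_sstar_mult_indicator) auto
  also have "\<dots> = bootE_first n (sstar n s x) j"
    using assms by (simp add: bootE_first_eq)
  finally show ?thesis .
qed

lemma is_boot_proj_iff:
  assumes "bootE n f = 0"
  shows "is_boot_proj n f l \<longleftrightarrow>
    (\<forall>I\<in>boot_space n. l I = (\<Sum>j<n. wcount n j I * bootE n (\<lambda>I. f I * wcount n j I)))"
proof -
  define \<beta> where "\<beta> j = bootE n (\<lambda>I. f I * wcount n j I)" for j
  have sum_\<beta>: "(\<Sum>j<n. \<beta> j) = 0"
    using assms by (simp add: \<beta>_def sum_bootE_mult_wcount)
  have residual: "bootE n (\<lambda>I. (f I - l I) * wcount n k I)
      = \<beta> k - (c k + (real n - 1) / real n * (\<Sum>j<n. c j))"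
    if "k < n" and l: "\<forall>I\<in>boot_space n. l I = (\<Sum>j<n. c j * wcount n j I)" for k c
  proof -
    have "bootE n (\<lambda>I. (f I - l I) * wcount n k I)
        = bootE n (\<lambda>I. f I * wcount n k I - (\<Sum>j<n. c j * wcount n j I) * wcount n k I)"
      using l by (intro bootE_cong) (simp add: left_diff_distrib)
    then show ?thesis
      using that(1) by (simp add: bootE_diff bootE_lincomb_wcount_mult \<beta>_def)
  qed
  show ?thesis
  proof
    assume "is_boot_proj n f l"
    then obtain c where l: "\<forall>I\<in>boot_space n. l I = (\<Sum>j<n. c j * wcount n j I)"
      and orth: "\<forall>k<n. bootE n (\<lambda>I. (f I - l I) * wcount n k I) = 0"
      unfolding is_boot_proj_def by blast
    define C where "C = (\<Sum>j<n. c j)"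
    have c: "c k = \<beta> k - (real n - 1) / real n * C" if "k < n" for k
    proof -
      have "bootE n (\<lambda>I. (f I - l I) * wcount n k I) = 0"
        using orth that by simp
      then show ?thesis
        using residual[OF that l] unfolding C_def by linarith
    qed
    have "C = 0"
    proof (cases "n = 0")
      case False
      have "C = (\<Sum>k<n. c k)"
        by (simp add: C_def)
      also have "\<dots> = (\<Sum>k<n. \<beta> k - (real n - 1) / real n * C)"
        by (intro sum.cong refl) (simp add: c)
      also have "\<dots> = (1 - real n) * C"
        using False by (simp add: sum_subtractf sum_\<beta>) (simp add: algebra_simps)
      finally show ?thesis
        using False by (simp add: algebra_simps)
    qed (simp add: C_def)
    then have c_eq: "c k = \<beta> k" if "k < n" for k
      using c[OF that] by simp
    have "(\<Sum>j<n. c j * wcount n j I) = (\<Sum>j<n. wcount n j I * \<beta> j)" for I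
      by (intro sum.cong refl) (simp add: c_eq mult.commute)
    then show "\<forall>I\<in>boot_space n. l I = (\<Sum>j<n. wcount n j I * bootE n (\<lambda>I. f I * wcount n j I))"
      using l by (simp add: \<beta>_def)
  next
    assume "\<forall>I\<in>boot_space n. l I = (\<Sum>j<n. wcount n j I * bootE n (\<lambda>I. f I * wcount n j I))"
    then have l: "\<forall>I\<in>boot_space n. l I = (\<Sum>j<n. \<beta> j * wcount n j I)"
      by (simp add: mult.commute \<beta>_def)
    have "bootE n (\<lambda>I. (f I - l I) * wcount n k I) = 0" if "k < n" for k
      using residual[OF that l] sum_\<beta> by simp
    then show "is_boot_proj n f l"
      unfolding is_boot_proj_def using l by (intro conjI exI[of _ \<beta>]) auto
  qed
qed

theorem theorem1:
  fixes n :: nat and x :: "nat \<Rightarrow> 'a" and s :: "'a list \<Rightarrow> real"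
  assumes "n \<ge> 1"
    and "symmetric_stat n s"
  defines "e \<equiv> \<lambda>j. bootE_first n (sstar n s x) j"
    and "s0 \<equiv> bootE n (sstar n s x)"
  shows "(\<forall>j<n. bootE n (\<lambda>I. sstar n s x I * wcount n j I) = e j)
    \<and> (\<exists>l. is_boot_proj n (\<lambda>I. sstar n s x I - s0) l)
    \<and> (\<forall>l. is_boot_proj n (\<lambda>I. sstar n s x I - s0) l \<longrightarrow>
          (\<forall>I \<in> boot_space n. l I = (\<Sum>j<n. wcount n j I * (e j - s0)))
          \<and> bootVar n l = (\<Sum>j<n. (e j - s0)\<^sup>2)
          \<and> (\<Sum>j<n. (e j - s0)\<^sup>2) = (\<Sum>j<n. (bootCov n (sstar n s x) (wcount n j))\<^sup>2))"
proof -
  let ?S = "sstar n s x"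
  have moment: "bootE n (\<lambda>I. ?S I * wcount n j I) = e j" if "j < n" for j
    using bootE_sstar_mult_wcount[OF assms(2) that] by (simp add: e_def)
  have centred: "bootE n (\<lambda>I. ?S I - s0) = 0"
    by (simp add: bootE_diff s0_def)
  have coeff: "bootE n (\<lambda>I. (?S I - s0) * wcount n j I) = e j - s0" if "j < n" for j
    using moment[OF that] bootE_wcount[OF that] by (simp add: left_diff_distrib bootE_diff bootE_cmult)
  have sum_coeff: "(\<Sum>j<n. e j - s0) = 0"
    using sum_bootE_mult_wcount[of n "\<lambda>I. ?S I - s0"] centred by (simp add: coeff)
  have proj: "is_boot_proj n (\<lambda>I. ?S I - s0) l
      \<longleftrightarrow> (\<forall>I\<in>boot_space n. l I = (\<Sum>j<n. wcount n j I * (e j - s0)))" for l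
    unfolding is_boot_proj_iff[OF centred] by (simp add: coeff)
  have var: "bootVar n l = (\<Sum>j<n. (e j - s0)\<^sup>2)"
    if "\<forall>I\<in>boot_space n. l I = (\<Sum>j<n. wcount n j I * (e j - s0))" for l
  proof -
    have "bootVar n l = bootVar n (\<lambda>I. \<Sum>j<n. (e j - s0) * wcount n j I)"
      using that by (intro bootVar_cong) (simp add: mult.commute)
    then show ?thesis
      by (simp add: bootVar_lincomb_wcount sum_coeff)
  qed
  have cov: "bootCov n ?S (wcount n j) = e j - s0" if "j < n" for j
    using coeff[OF that] by (simp add: bootCov_wcount[OF that] s0_def)
  show ?thesis
    using moment proj var cov by auto
qed

end
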